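(* Let $k\ge r\ge 3$ and $t\ge0$ be integers and let $\pi\in\mathbb{C}(k,r)$ be a partition whose largest odd part is $2t+1$. Then: (1) if there is a part $2t+2$ with mark $2$ in $GG(\pi)$, then this part is of starting type $s_0$ or $s_2$; (2) if there is a part $2t+4$ with mark $2$ in $GG(\pi)$, then this part is of starting type $s_3$.
   Context: A partition $\pi=(\pi_1,\dots,\pi_\ell)$ is a finite non-increasing sequence of positive integers; "$a$ occurs in $\pi$" means $a=\pi_i$ for some $i$. Göllnitz–Gordon marking: $GG(\pi)$ assigns a positive integer (mark) to each part, processing the parts from smallest to largest; $\pi_i$ receives the smallest positive integer different from the marks of all parts $\pi_g$ with $g>i$ and $\pi_i-\pi_g\le 2$, where $\pi_i-\pi_g<2$ is required when $\pi_i$ is odd. An "$r$-marked part $a$" is a part equal to $a$ with mark $r$. $N_i(\pi)$ is the number of parts with mark $i$; $\pi^{(i)}_1\ge\dots\ge\pi^{(i)}_{N_i(\pi)}$ are the parts with mark $i$, with $\pi^{(i)}_0=+\infty$. $\mathbb{C}(k,r)$: partitions with (i) no odd part repeated; (ii) $\pi_i\ge\pi_{i+k-1}+2$ for $1\le i\le\ell-k+1$, strict if $\pi_i$ even; (iii) at most $r-1$ parts $\le 2$. Starting types: for $\pi\in\mathbb{C}(k,r)$ with $N_2=N_2(\pi)\ge1$, let $l$ be the largest integer in $\{0,\dots,N_2\}$ such that no odd part of $\pi$ is $\ge\pi^{(2)}_l$; for $l<i\le N_2$, $\pi^{(2)}_i$ has type $s_{-1}$. For $b=1,\dots,l$ in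 increasing order, type and auxiliary $\sigma_b$: for $b=1$: Case 1: 1-marked part $\pi^{(2)}_1-1$ exists and $\pi^{(2)}_1+2$ does not occur: type $s_0$, $\sigma_1=\pi^{(2)}_1-1$; Case 2: 1-marked $\pi^{(2)}_1-2$ exists and $\pi^{(2)}_1+2$ does not occur: type $s_1$, $\sigma_1=\pi^{(2)}_1-2$; Case 3: 1-marked $\pi^{(2)}_1+2$ exists: type $s_2$, $\sigma_1=\pi^{(2)}_1+2$; Case 4: 1-marked $\pi^{(2)}_1$ exists: type $s_3$, $\sigma_1=\pi^{(2)}_1$. For $2\le b\le l$: Case 1: 1-marked $\pi^{(2)}_b-1$ exists and, if a 1-marked $\pi^{(2)}_b+2$ exists, $\sigma_{b-1}=\pi^{(2)}_b+2$: type $s_0$, $\sigma_b=\pi^{(2)}_b-1$; Case 2: same with $\pi^{(2)}_b-2$: type $s_1$, $\sigma_b=\pi^{(2)}_b-2$; Case 3: 1-marked $\pi^{(2)}_b+2$ exists and $\sigma_{b-1}\ne\pi^{(2)}_b+2$: type $s_2$, $\sigma_b=\pi^{(2)}_b+2$; Case 4: 1-marked $\pi^{(2)}_b$ exists: type $s_3$, $\sigma_b=\pi^{(2)}_b$. *)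

theory Defs
  imports Main
begin

text \<open>A partition is a list of positive integers in non-increasing order.
  Index i (0-based) in the list corresponds to \<pi>_(i+1) in the paper.\<close>

definition is_partition :: "nat list \<Rightarrow> bool" where
  "is_partition \<pi> \<longleftrightarrow> sorted (rev \<pi>) \<and> (\<forall>p\<in>set \<pi>. 0 < p)"

text \<open>For \<pi> = a # rest (a the largest part), all parts
  of rest have larger index; a gets the least positive integer different from the
  marks of the parts g of rest with a - g \<le> 2 (a - g < 2 if a is odd).\<close>

fun gg_marks :: "nat list \<Rightarrow> nat list" where
  "gg_marks [] = []"
| "gg_marks (a # rest) =
     (let ms = gg_marks rest;
          forb = {ms ! j | j. j < length rest \<and> a - rest ! j \<le> 2 \<and>
                               (odd a \<longrightarrow> a - rest ! j < 2)}
      in (LEAST m. 0 < m \<and> m \<notin> forb) # ms)"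

definition mark :: "nat list \<Rightarrow> nat \<Rightarrow> nat" where
  "mark \<pi> i = gg_marks \<pi> ! i"

definition marked_part :: "nat list \<Rightarrow> nat \<Rightarrow> nat \<Rightarrow> bool" where
  "marked_part \<pi> r a \<longleftrightarrow> (\<exists>i < length \<pi>. \<pi> ! i = a \<and> mark \<pi> i = r)"

text \<open>The parts with mark i, in non-increasing order; (parts_mark \<pi> i) ! (b-1) is \<pi>^(i)_b.\<close>
definition parts_mark :: "nat list \<Rightarrow> nat \<Rightarrow> nat list" where
  "parts_mark \<pi> i = [\<pi> ! j. j \<leftarrow> [0..<length \<pi>], mark \<pi> j = i]"

definition N :: "nat list \<Rightarrow> nat \<Rightarrow> nat" where
  "N \<pi> i = length (parts_mark \<pi> i)"

definition Ckr :: "nat \<Rightarrow> nat \<Rightarrow> nat list set" where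
  "Ckr k r = {\<pi>. is_partition \<pi>
     \<and> (\<forall>i j. i < length \<pi> \<and> j < length \<pi> \<and> i \<noteq> j \<and> \<pi> ! i = \<pi> ! j \<longrightarrow> even (\<pi> ! i))
     \<and> (\<forall>i. i + k - 1 < length \<pi> \<longrightarrow>
           \<pi> ! i \<ge> \<pi> ! (i + k - 1) + 2 \<and>
           (even (\<pi> ! i) \<longrightarrow> \<pi> ! i > \<pi> ! (i + k - 1) + 2))
     \<and> length (filter (\<lambda>p. p \<le> 2) \<pi>) \<le> r - 1}"

datatype stype = s_m1 | s0 | s1 | s2 | s3 | no_type

definition p2 :: "nat list \<Rightarrow> nat \<Rightarrow> nat" where
  "p2 \<pi> b = parts_mark \<pi> 2 ! (b - 1)"

text \<open>The integer l: largest l in {0..N_2} such that no odd part is \<ge> \<pi>^(2)_l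
  (with \<pi>^(2)_0 = +\<infinity>).\<close>
definition ell :: "nat list \<Rightarrow> nat" where
  "ell \<pi> = (GREATEST l. l \<le> N \<pi> 2 \<and>
              (l = 0 \<or> (\<forall>p\<in>set \<pi>. odd p \<longrightarrow> p < p2 \<pi> l)))"

text \<open>(type, \<sigma>_b) for b \<ge> 1, computed for b = 1,2,... in increasing order;
  the cases are tried in the order Case 1, 2, 3, 4. Value at 0 is a dummy.\<close>
fun st_sigma :: "nat list \<Rightarrow> nat \<Rightarrow> stype \<times> nat" where
  "st_sigma \<pi> 0 = (no_type, 0)"
| "st_sigma \<pi> (Suc b) =
    (let x = p2 \<pi> (Suc b) in
     if b = 0 then
       (if marked_part \<pi> 1 (x - 1) \<and> x + 2 \<notin> set \<pi> then (s0, x - 1)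
        else if marked_part \<pi> 1 (x - 2) \<and> x + 2 \<notin> set \<pi> then (s1, x - 2)
        else if marked_part \<pi> 1 (x + 2) then (s2, x + 2)
        else if marked_part \<pi> 1 x then (s3, x)
        else (no_type, 0))
     else
       (let \<sigma> = snd (st_sigma \<pi> b) in
        if marked_part \<pi> 1 (x - 1) \<and> (marked_part \<pi> 1 (x + 2) \<longrightarrow> \<sigma> = x + 2) then (s0, x - 1)
        else if marked_part \<pi> 1 (x - 2) \<and> (marked_part \<pi> 1 (x + 2) \<longrightarrow> \<sigma> = x + 2) then (s1, x - 2)
        else if marked_part \<pi> 1 (x + 2) \<and> \<sigma> \<noteq> x + 2 then (s2, x + 2)
        else if marked_part \<pi> 1 x then (s3, x)
        else (no_type, 0)))"

definition start_type :: "nat list \<Rightarrow> nat \<Rightarrow> stype" where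
  "start_type \<pi> b = (if ell \<pi> < b then s_m1 else fst (st_sigma \<pi> b))"

end

theory Submission
  imports Defs
begin

text \<open>Odd parts are not repeated, so the only part below the largest odd part 2t+1 that is
  GG-near to it is 2t. A part 2t+2 is near both 2t+1 and 2t, hence if it has mark m, then 2t+1
  has a mark smaller than m: no part 2t+2 has mark 1, and if one has mark 2, then 2t+1 has
  mark 1 and 2t has not. As 2t+3 does not occur, the lowest part 2t+4 has mark 1, which in turn
  excludes a 1-marked 2t+6. These facts decide the case distinction defining the starting
  types.\<close>

definition gg_near :: "nat \<Rightarrow> nat \<Rightarrow> bool" where
  "gg_near a g \<longleftrightarrow> a - g \<le> 2 \<and> (odd a \<longrightarrow> a - g < 2)"

definition gg_forbidden :: "nat list \<Rightarrow> nat \<Rightarrow> nat set" where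
  "gg_forbidden xs i = {mark xs j | j. i < j \<and> j < length xs \<and> gg_near (xs ! i) (xs ! j)}"

lemma length_gg_marks [simp]: "length (gg_marks xs) = length xs"
  by (induction xs) (simp_all add: Let_def)

lemma mark_Cons_Suc [simp]: "mark (a # xs) (Suc i) = mark xs i"
  by (simp add: mark_def Let_def)

lemma gg_forbidden_Cons_Suc: "gg_forbidden (a # xs) (Suc i) = gg_forbidden xs i"
  unfolding gg_forbidden_def by (auto simp: Suc_less_eq2) (metis Suc_less_eq mark_Cons_Suc nth_Cons_Suc)

lemma mark_Cons_0: "mark (a # xs) 0 = (LEAST m. 0 < m \<and> m \<notin> gg_forbidden (a # xs) 0)"
proof -
  have "gg_forbidden (a # xs) 0 = {mark xs j | j. j < length xs \<and> gg_near a (xs ! j)}"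
    unfolding gg_forbidden_def by (auto simp: gr0_conv_Suc) (metis Suc_less_eq mark_Cons_Suc nth_Cons_Suc)
  then show ?thesis by (simp add: mark_def Let_def gg_near_def)
qed

lemma mark_eq_Least:
  "i < length xs \<Longrightarrow> mark xs i = (LEAST m. 0 < m \<and> m \<notin> gg_forbidden xs i)"
proof (induction xs arbitrary: i)
  case (Cons a xs)
  then show ?case by (cases i) (simp_all add: mark_Cons_0 gg_forbidden_Cons_Suc)
qed simp

lemma mark_not_in_gg_forbidden:
  assumes "i < length xs"
  shows "0 < mark xs i \<and> mark xs i \<notin> gg_forbidden xs i"
proof -
  have "gg_forbidden xs i \<subseteq> mark xs ` {..<length xs}"
    unfolding gg_forbidden_def by blast
  then have "finite (insert 0 (gg_forbidden xs i))"
    by (meson finite_imageI finite_insert finite_lessThan finite_subset)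
  then obtain m where "m \<notin> insert 0 (gg_forbidden xs i)"
    using ex_new_if_finite[OF infinite_UNIV_nat] by blast
  then have "0 < m \<and> m \<notin> gg_forbidden xs i" by simp
  then show ?thesis unfolding mark_eq_Least[OF assms] by (rule LeastI)
qed

lemma mark_pos: "i < length xs \<Longrightarrow> 0 < mark xs i"
  using mark_not_in_gg_forbidden by blast

lemma mark_neq_if_gg_near:
  assumes "i < j" "j < length xs" "gg_near (xs ! i) (xs ! j)"
  shows "mark xs i \<noteq> mark xs j"
proof -
  have "mark xs j \<in> gg_forbidden xs i"
    unfolding gg_forbidden_def using assms by blast
  then show ?thesis using mark_not_in_gg_forbidden[of i xs] assms by auto
qed

lemma smaller_mark_attained_below:
  assumes "i < length xs" "0 < m" "m < mark xs i"
  obtains j where "i < j" "j < length xs" "gg_near (xs ! i) (xs ! j)" "mark xs j = m"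
proof -
  have "m \<in> gg_forbidden xs i"
  proof (rule ccontr)
    assume "m \<notin> gg_forbidden xs i"
    with assms(2) have "mark xs i \<le> m"
      unfolding mark_eq_Least[OF assms(1)] by (simp add: Least_le)
    with assms(3) show False by simp
  qed
  then show ?thesis using that unfolding gg_forbidden_def by blast
qed

lemma partition_index_less:
  assumes "is_partition xs" "i < length xs" "xs ! j < xs ! i"
  shows "i < j"
  using assms sorted_rev_nth_mono[of xs j i] unfolding is_partition_def by fastforce

lemma marked_parts_not_gg_near:
  assumes "is_partition xs" "marked_part xs m a" "marked_part xs m g" "g < a"
  shows "\<not> gg_near a g"
proof
  assume "gg_near a g"
  obtain i where i: "i < length xs" "xs ! i = a" "mark xs i = m"
    using assms(2) unfolding marked_part_def by blast
  obtain j where j: "j < length xs" "xs ! j = g" "mark xs j = m"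
    using assms(3) unfolding marked_part_def by blast
  have "i < j" using partition_index_less[OF assms(1) i(1)] i j assms(4) by simp
  then show False using mark_neq_if_gg_near[OF _ j(1)] i j \<open>gg_near a g\<close> by simp
qed

text \<open>Take the lowest occurrence of a: a mark above 1 would need a 1-marked part just
  below it.\<close>

lemma marked_part_1_if_no_gg_near_below:
  assumes "is_partition xs" "a \<in> set xs"
    and no_near: "\<And>g. g < a \<Longrightarrow> gg_near a g \<Longrightarrow> \<not> marked_part xs 1 g"
  shows "marked_part xs 1 a"
proof -
  define I where "I = {i. i < length xs \<and> xs ! i = a}"
  define i where "i = Max I"
  have "finite I" unfolding I_def by simp
  moreover have "I \<noteq> {}" using assms(2) unfolding I_def by (auto simp: in_set_conv_nth)
  ultimately have "i \<in> I" and lowest: "\<And>j. j \<in> I \<Longrightarrow> j \<le> i"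
    unfolding i_def by simp_all
  then have i: "i < length xs" "xs ! i = a" unfolding I_def by simp_all
  have "mark xs i = 1"
  proof (rule ccontr)
    assume "mark xs i \<noteq> 1"
    with mark_pos[OF i(1)] obtain j where
      j: "i < j" "j < length xs" "gg_near a (xs ! j)" "mark xs j = 1"
      using smaller_mark_attained_below[OF i(1), of 1] i(2) by auto
    have "xs ! j < a"
      using sorted_rev_nth_mono[of xs i j] assms(1) i j lowest[of j]
      unfolding is_partition_def I_def by fastforce
    with no_near j show False unfolding marked_part_def by blast
  qed
  then show ?thesis using i unfolding marked_part_def by blast
qed

lemma marked_part_in_set: "marked_part xs m a \<Longrightarrow> a \<in> set xs"
  unfolding marked_part_def by auto

lemma p2_marked_part:
  assumes "1 \<le> b" "b \<le> N xs 2"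
  shows "marked_part xs 2 (p2 xs b)"
proof -
  have "p2 xs b \<in> set (parts_mark xs 2)"
    using assms unfolding p2_def N_def by simp
  then show ?thesis unfolding parts_mark_def marked_part_def by auto
qed

lemma start_type_eq_st_sigma:
  assumes "1 \<le> b" "b \<le> N xs 2" "\<forall>p\<in>set xs. odd p \<longrightarrow> p < p2 xs b"
  shows "start_type xs b = fst (st_sigma xs b)"
proof -
  have "b \<le> ell xs"
    unfolding ell_def by (rule Greatest_le_nat[where b = "N xs 2"]) (use assms in auto)
  then show ?thesis unfolding start_type_def by simp
qed

lemma start_type_s0_or_s2:
  assumes "1 \<le> b" "b \<le> N xs 2" "\<forall>p\<in>set xs. odd p \<longrightarrow> p < p2 xs b"
    and "marked_part xs 1 (p2 xs b - 1)" "\<not> marked_part xs 1 (p2 xs b - 2)"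
    and "p2 xs b + 2 \<in> set xs \<Longrightarrow> marked_part xs 1 (p2 xs b + 2)"
  shows "start_type xs b \<in> {s0, s2}"
proof -
  obtain b' where b': "b = Suc b'" using assms(1) by (cases b) auto
  have "fst (st_sigma xs (Suc b')) \<in> {s0, s2}"
    using assms(4-) unfolding b'
    by (cases "b' = 0"; cases "p2 xs (Suc b') + 2 \<in> set xs") (simp_all add: Let_def)
  then show ?thesis using start_type_eq_st_sigma[OF assms(1-3)] b' by simp
qed

lemma start_type_s3:
  assumes "1 \<le> b" "b \<le> N xs 2" "\<forall>p\<in>set xs. odd p \<longrightarrow> p < p2 xs b"
    and "marked_part xs 1 (p2 xs b)"
    and "\<not> marked_part xs 1 (p2 xs b - 1)" "\<not> marked_part xs 1 (p2 xs b - 2)"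
    and "\<not> marked_part xs 1 (p2 xs b + 2)"
  shows "start_type xs b = s3"
proof -
  obtain b' where b': "b = Suc b'" using assms(1) by (cases b) auto
  have "fst (st_sigma xs (Suc b')) = s3"
    using assms(4-) unfolding b' by (cases "b' = 0") (simp_all add: Let_def)
  then show ?thesis using start_type_eq_st_sigma[OF assms(1-3)] b' by simp
qed

locale largest_odd_part =
  fixes xs :: "nat list" and t :: nat
  assumes partition: "is_partition xs"
    and odd_parts_distinct:
      "\<And>i j. i < length xs \<Longrightarrow> j < length xs \<Longrightarrow> i \<noteq> j \<Longrightarrow> xs ! i = xs ! j \<Longrightarrow> even (xs ! i)"
    and largest_odd_in: "2 * t + 1 \<in> set xs"
    and odd_le_largest: "\<And>p. p \<in> set xs \<Longrightarrow> odd p \<Longrightarrow> p \<le> 2 * t + 1"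
begin

lemma gg_near_below_largest_odd:
  assumes "i < j" "j < length xs" "xs ! i = 2 * t + 1" "gg_near (2 * t + 1) (xs ! j)"
  shows "xs ! j = 2 * t"
proof -
  have "xs ! j \<le> 2 * t + 1"
    using sorted_rev_nth_mono[of xs i j] partition assms unfolding is_partition_def by simp
  moreover have "xs ! j \<noteq> 2 * t + 1"
    using odd_parts_distinct[of i j] assms by auto
  ultimately show ?thesis using assms(4) unfolding gg_near_def by arith
qed

lemma mark_largest_odd_less:
  assumes "marked_part xs m (2 * t + 2)" "i < length xs" "xs ! i = 2 * t + 1"
  shows "mark xs i < m"
proof (rule ccontr)
  assume "\<not> mark xs i < m"
  obtain h where h: "h < length xs" "xs ! h = 2 * t + 2" "mark xs h = m"
    using assms(1) unfolding marked_part_def by blast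
  have "h < i" using partition_index_less[OF partition h(1)] h assms by simp
  show False
  proof (cases "mark xs i = m")
    case True
    then show False using mark_neq_if_gg_near[OF \<open>h < i\<close> assms(2)] h assms
      by (simp add: gg_near_def)
  next
    case False
    with \<open>\<not> mark xs i < m\<close> mark_pos[OF h(1)] h(3) obtain j where
      j: "i < j" "j < length xs" "gg_near (2 * t + 1) (xs ! j)" "mark xs j = m"
      using smaller_mark_attained_below[OF assms(2), of m] assms(3) by auto
    then have "xs ! j = 2 * t" using gg_near_below_largest_odd assms by blast
    then show False using mark_neq_if_gg_near[of h j xs] \<open>h < i\<close> h j
      by (simp add: gg_near_def)
  qed
qed

lemma not_marked_part_1_2t2: "\<not> marked_part xs 1 (2 * t + 2)"
proof
  assume "marked_part xs 1 (2 * t + 2)"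
  moreover obtain i where "i < length xs" "xs ! i = 2 * t + 1"
    using largest_odd_in by (auto simp: in_set_conv_nth)
  ultimately show False using mark_largest_odd_less mark_pos by fastforce
qed

lemma marked_part_1_largest_odd:
  assumes "marked_part xs 2 (2 * t + 2)"
  shows "marked_part xs 1 (2 * t + 1)"
proof -
  obtain i where i: "i < length xs" "xs ! i = 2 * t + 1"
    using largest_odd_in by (auto simp: in_set_conv_nth)
  then have "mark xs i = 1"
    using mark_largest_odd_less[OF assms] mark_pos[OF i(1)] by fastforce
  then show ?thesis using i unfolding marked_part_def by blast
qed

lemma not_in_set_2t3: "2 * t + 3 \<notin> set xs"
  using odd_le_largest by fastforce

lemma marked_part_1_2t4:
  assumes "2 * t + 4 \<in> set xs"
  shows "marked_part xs 1 (2 * t + 4)"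
proof (rule marked_part_1_if_no_gg_near_below[OF partition assms])
  fix g assume "g < 2 * t + 4" "gg_near (2 * t + 4) g"
  then have "g = 2 * t + 2 \<or> g = 2 * t + 3" unfolding gg_near_def by auto
  then show "\<not> marked_part xs 1 g"
    using not_marked_part_1_2t2 not_in_set_2t3 marked_part_in_set by blast
qed

lemma odd_parts_below:
  assumes "2 * t + 1 < x"
  shows "\<forall>p\<in>set xs. odd p \<longrightarrow> p < x"
  using odd_le_largest assms by fastforce

lemma start_type_2t2:
  assumes "1 \<le> b" "b \<le> N xs 2" "p2 xs b = 2 * t + 2"
  shows "start_type xs b \<in> {s0, s2}"
proof (rule start_type_s0_or_s2[OF assms(1,2)])
  have shifts: "p2 xs b - 1 = 2 * t + 1" "p2 xs b - 2 = 2 * t" "p2 xs b + 2 = 2 * t + 4"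
    using assms(3) by simp_all
  show "\<forall>p\<in>set xs. odd p \<longrightarrow> p < p2 xs b"
    using odd_parts_below assms(3) by simp
  have "marked_part xs 2 (2 * t + 2)"
    using p2_marked_part[OF assms(1,2)] assms(3) by simp
  then show marked_odd: "marked_part xs 1 (p2 xs b - 1)"
    unfolding shifts by (rule marked_part_1_largest_odd)
  show "\<not> marked_part xs 1 (p2 xs b - 2)"
    using marked_parts_not_gg_near[OF partition marked_odd[unfolded shifts], of "2 * t"]
    unfolding shifts by (auto simp: gg_near_def)
  show "p2 xs b + 2 \<in> set xs \<Longrightarrow> marked_part xs 1 (p2 xs b + 2)"
    unfolding shifts by (rule marked_part_1_2t4)
qed

lemma start_type_2t4:
  assumes "1 \<le> b" "b \<le> N xs 2" "p2 xs b = 2 * t + 4"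
  shows "start_type xs b = s3"
proof (rule start_type_s3[OF assms(1,2)])
  have shifts: "p2 xs b - 1 = 2 * t + 3" "p2 xs b - 2 = 2 * t + 2" "p2 xs b + 2 = 2 * t + 6"
    using assms(3) by simp_all
  show "\<forall>p\<in>set xs. odd p \<longrightarrow> p < p2 xs b"
    using odd_parts_below assms(3) by simp
  have "2 * t + 4 \<in> set xs"
    using marked_part_in_set p2_marked_part[OF assms(1,2)] assms(3) by simp
  then show marked: "marked_part xs 1 (p2 xs b)"
    unfolding assms(3) by (rule marked_part_1_2t4)
  show "\<not> marked_part xs 1 (p2 xs b - 1)"
    unfolding shifts using not_in_set_2t3 marked_part_in_set by blast
  show "\<not> marked_part xs 1 (p2 xs b - 2)"
    unfolding shifts by (rule not_marked_part_1_2t2)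
  show "\<not> marked_part xs 1 (p2 xs b + 2)"
    using marked_parts_not_gg_near[OF partition _ marked[unfolded assms(3)], where a = "2 * t + 6"]
    unfolding shifts by (auto simp: gg_near_def)
qed

end

lemma Ckr_largest_odd_part:
  assumes "\<pi> \<in> Ckr k r" "2 * t + 1 \<in> set \<pi>" "\<forall>p\<in>set \<pi>. odd p \<longrightarrow> p \<le> 2 * t + 1"
  shows "largest_odd_part \<pi> t"
  using assms unfolding Ckr_def largest_odd_part_def by blast

theorem corollary2p11:
  fixes k r t :: nat and \<pi> :: "nat list"
  assumes "3 \<le> r" and "r \<le> k"
    and "\<pi> \<in> Ckr k r"
    and "2 * t + 1 \<in> set \<pi>" and "\<forall>p\<in>set \<pi>. odd p \<longrightarrow> p \<le> 2 * t + 1"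
  shows "(\<forall>b. 1 \<le> b \<and> b \<le> N \<pi> 2 \<and> p2 \<pi> b = 2 * t + 2 \<longrightarrow>
             start_type \<pi> b \<in> {s0, s2})
       \<and> (\<forall>b. 1 \<le> b \<and> b \<le> N \<pi> 2 \<and> p2 \<pi> b = 2 * t + 4 \<longrightarrow>
             start_type \<pi> b = s3)"
proof -
  interpret largest_odd_part \<pi> t
    using Ckr_largest_odd_part assms(3-5) .
  show ?thesis using start_type_2t2 start_type_2t4 by blast
qed

end
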